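(* Let $S>0$, let $I\ge 1$, let $N_1,\dots,N_I$ be positive integers and let $\theta_1>\theta_2>\dots>\theta_I>0$. Consider the single pricing problem $$\max_{p>0,\ \{n_i\}}\ p\sum_{i=1}^I n_i s_i\quad\text{s.t.}\quad s_i=\Big(\frac{\theta_i}{p}-1\Big)^+,\ \ n_i\in\{0,1,\dots,N_i\}\ (i=1,\dots,I),\quad \sum_{i=1}^I n_i s_i\le S,$$ where $(x)^+=\max(x,0)$. For $k\in\{1,\dots,I\}$ let $p(k)=\frac{\sum_{i=1}^k N_i\theta_i}{S+\sum_{i=1}^k N_i}$, let $K^{sp}=\max\{k\in\{1,\dots,I\}:\theta_k>p(k)\}$ (this set contains $k=1$), and let $p^*=p(K^{sp})$. Then this problem has an optimal solution in which $n_i=N_i$ for all $i$, the price is $p^*$, and the resulting allocations are $s_i=\theta_i/p^*-1$ for $i=1,\dots,K^{sp}$ and $s_i=0$ for $i=K^{sp}+1,\dots,I$.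
   Context: Each user of group $i$ has utility $\theta_i\ln(1+s)$ for $s$ units of resource and, facing unit price $p$, demands $(\theta_i/p-1)^+$. The service provider has total resource $S$, charges one common unit price $p$ to all users, and chooses the number $n_i$ of admitted users of each group. *)

theory Defs
  imports Complex_Main
begin

definition pos_part :: "real \<Rightarrow> real" where
  "pos_part x = max x 0"

definition demand :: "real \<Rightarrow> real \<Rightarrow> real" where
  "demand th p = pos_part (th / p - 1)"

definition used :: "nat \<Rightarrow> (nat \<Rightarrow> real) \<Rightarrow> real \<Rightarrow> (nat \<Rightarrow> nat) \<Rightarrow> real" where
  "used I \<theta> p n = (\<Sum>i=1..I. real (n i) * demand (\<theta> i) p)"

definition revenue :: "nat \<Rightarrow> (nat \<Rightarrow> real) \<Rightarrow> real \<Rightarrow> (nat \<Rightarrow> nat) \<Rightarrow> real" where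
  "revenue I \<theta> p n = p * used I \<theta> p n"

definition feasible :: "nat \<Rightarrow> (nat \<Rightarrow> nat) \<Rightarrow> (nat \<Rightarrow> real) \<Rightarrow> real \<Rightarrow> real \<Rightarrow> (nat \<Rightarrow> nat) \<Rightarrow> bool" where
  "feasible I N \<theta> S p n \<longleftrightarrow> p > 0 \<and> (\<forall>i\<in>{1..I}. n i \<le> N i) \<and> used I \<theta> p n \<le> S"

definition pk :: "(nat \<Rightarrow> nat) \<Rightarrow> (nat \<Rightarrow> real) \<Rightarrow> real \<Rightarrow> nat \<Rightarrow> real" where
  "pk N \<theta> S k = (\<Sum>i=1..k. real (N i) * \<theta> i) / (S + (\<Sum>i=1..k. real (N i)))"

definition Ksp :: "nat \<Rightarrow> (nat \<Rightarrow> nat) \<Rightarrow> (nat \<Rightarrow> real) \<Rightarrow> real \<Rightarrow> nat" where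
  "Ksp I N \<theta> S = Max {k \<in> {1..I}. \<theta> k > pk N \<theta> S k}"

end

theory Submission
  imports Defs
begin

text \<open>
  A price at which admitting everybody uses up exactly the resource S is optimal:
  at a lower price q the revenue is at most q S, and at a higher price the payment
  p s = max (\<theta> - p) 0 of every single user is smaller.  The price p(k) is exactly
  the price at which the groups 1..k, all priced in, consume S.  Since p(k+1) is a
  mediant of p(k) and \<theta>(k+1), group k+1 is priced out at p(k) iff it is priced out
  at p(k+1); hence at p(Ksp) precisely the groups 1..Ksp are priced in and the
  resource is saturated.
\<close>

lemma demand_of_less: "0 < p \<Longrightarrow> p < th \<Longrightarrow> demand th p = th / p - 1"
  unfolding demand_def pos_part_def by (simp add: field_simps)

lemma demand_of_ge: "0 < p \<Longrightarrow> th \<le> p \<Longrightarrow> demand th p = 0"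
  unfolding demand_def pos_part_def by (simp add: field_simps)

lemma mult_demand: "0 < p \<Longrightarrow> p * demand th p = max (th - p) 0"
  unfolding demand_def pos_part_def by (auto simp: max_def field_simps)

lemma used_nonneg: "0 \<le> used I \<theta> p n"
  unfolding used_def demand_def pos_part_def by (intro sum_nonneg) auto

lemma revenue_eq_sum:
  "0 < p \<Longrightarrow> revenue I \<theta> p n = (\<Sum>i=1..I. real (n i) * max (\<theta> i - p) 0)"
  unfolding revenue_def used_def sum_distrib_left
  by (rule sum.cong) (auto simp: mult_demand[symmetric] algebra_simps)

lemma revenue_le_saturated:
  assumes "feasible I N \<theta> S q n" and "0 < p" and "used I \<theta> p N = S"
  shows "revenue I \<theta> q n \<le> revenue I \<theta> p N"
proof (cases "q \<le> p")
  case True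
  from assms(1) have "0 < q" "used I \<theta> q n \<le> S" unfolding feasible_def by auto
  then have "revenue I \<theta> q n \<le> q * S"
    unfolding revenue_def by (simp add: mult_left_mono)
  also have "\<dots> \<le> p * S"
    using True assms(3) used_nonneg[of I \<theta> p N] by (simp add: mult_right_mono)
  finally show ?thesis by (simp add: revenue_def assms(3))
next
  case False
  from assms(1) have q: "0 < q" and nN: "\<forall>i\<in>{1..I}. n i \<le> N i"
    unfolding feasible_def by auto
  have "revenue I \<theta> q n = (\<Sum>i=1..I. real (n i) * max (\<theta> i - q) 0)"
    using revenue_eq_sum q .
  also have "\<dots> \<le> (\<Sum>i=1..I. real (N i) * max (\<theta> i - p) 0)"
  proof (rule sum_mono)
    fix i assume "i \<in> {1..I}"
    then have "real (n i) * max (\<theta> i - q) 0 \<le> real (N i) * max (\<theta> i - q) 0"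
      using nN by (intro mult_right_mono) auto
    also have "\<dots> \<le> real (N i) * max (\<theta> i - p) 0"
      using False by (intro mult_left_mono) auto
    finally show "real (n i) * max (\<theta> i - q) 0 \<le> real (N i) * max (\<theta> i - p) 0" .
  qed
  also have "\<dots> = revenue I \<theta> p N"
    using revenue_eq_sum assms(2) by simp
  finally show ?thesis .
qed

lemma pk_denominator_pos: "0 < S \<Longrightarrow> 0 < S + (\<Sum>i=1..k. real (N i))"
  by (simp add: add_pos_nonneg sum_nonneg)

lemma le_pk_Suc_iff:
  assumes "0 < S"
  shows "\<theta> (Suc k) \<le> pk N \<theta> S (Suc k) \<longleftrightarrow> \<theta> (Suc k) \<le> pk N \<theta> S k"
proof -
  define A where "A = (\<Sum>i=1..k. real (N i) * \<theta> i)"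
  define B where "B = S + (\<Sum>i=1..k. real (N i))"
  define t where "t = \<theta> (Suc k)"
  have B: "0 < B" "0 < B + N (Suc k)"
    using pk_denominator_pos[OF assms, of N k] unfolding B_def by auto
  have "pk N \<theta> S (Suc k) = (A + N (Suc k) * t) / (B + N (Suc k))"
    unfolding pk_def A_def B_def t_def by (simp add: add_ac)
  then have "t \<le> pk N \<theta> S (Suc k) \<longleftrightarrow> t * (B + N (Suc k)) \<le> A + N (Suc k) * t"
    using B(2) by (simp add: pos_le_divide_eq)
  also have "\<dots> \<longleftrightarrow> t * B \<le> A"
    by (simp add: algebra_simps)
  also have "\<dots> \<longleftrightarrow> t \<le> pk N \<theta> S k"
    unfolding pk_def A_def B_def using B(1) B_def by (simp add: pos_le_divide_eq)
  finally show ?thesis unfolding t_def .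
qed

lemma pk_pos:
  assumes "0 < S" and "1 \<le> k" and "\<forall>i\<in>{1..k}. 1 \<le> N i \<and> 0 < \<theta> i"
  shows "0 < pk N \<theta> S k"
proof -
  have "0 < (\<Sum>i=1..k. real (N i) * \<theta> i)"
    using assms(2,3) by (intro sum_pos mult_pos_pos) (auto simp: Suc_le_eq)
  then show ?thesis
    unfolding pk_def using pk_denominator_pos[OF assms(1), of N k] by simp
qed

lemma used_at_pk:
  assumes "k \<le> I" and "0 < pk N \<theta> S k"
    and above: "\<forall>i\<in>{1..k}. pk N \<theta> S k < \<theta> i"
    and below: "\<forall>i\<in>{k+1..I}. \<theta> i \<le> pk N \<theta> S k"
  shows "used I \<theta> (pk N \<theta> S k) N = S"
proof -
  define p where "p = pk N \<theta> S k"
  have "used I \<theta> p N = (\<Sum>i=1..k. real (N i) * demand (\<theta> i) p)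
      + (\<Sum>i=k+1..I. real (N i) * demand (\<theta> i) p)"
    unfolding used_def using assms(1) by (subst sum.union_disjoint[symmetric]) (auto intro: sum.cong)
  also have "\<dots> = (\<Sum>i=1..k. real (N i) * (\<theta> i / p - 1))"
    using above below assms(2) by (simp add: p_def demand_of_less demand_of_ge)
  also have "\<dots> = (\<Sum>i=1..k. real (N i) * \<theta> i) / p - (\<Sum>i=1..k. real (N i))"
    by (simp add: algebra_simps sum_subtractf sum_divide_distrib)
  also have "\<dots> = S"
  proof -
    define A where "A = (\<Sum>i=1..k. real (N i) * \<theta> i)"
    define B where "B = S + (\<Sum>i=1..k. real (N i))"
    have "0 < A / B"
      using assms(2) unfolding pk_def A_def B_def .
    then have "A \<noteq> 0" "B \<noteq> 0" by auto
    then show ?thesis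
      unfolding p_def pk_def A_def[symmetric] B_def[symmetric] by (simp add: B_def)
  qed
  finally show ?thesis unfolding p_def .
qed

lemma pk_one_less: "0 < S \<Longrightarrow> 0 < \<theta> 1 \<Longrightarrow> pk N \<theta> S 1 < \<theta> 1"
  unfolding pk_def by (simp add: field_simps)

lemma Ksp_mem:
  assumes "1 \<le> I" and "pk N \<theta> S 1 < \<theta> 1"
  shows "Ksp I N \<theta> S \<in> {k \<in> {1..I}. pk N \<theta> S k < \<theta> k}"
  unfolding Ksp_def using assms by (intro Max_in) auto

lemma le_Ksp: "k \<in> {1..I} \<Longrightarrow> pk N \<theta> S k < \<theta> k \<Longrightarrow> k \<le> Ksp I N \<theta> S"
  unfolding Ksp_def by (intro Max_ge) auto

lemma pk_Ksp_less:
  assumes "1 \<le> I" and "pk N \<theta> S 1 < \<theta> 1"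
    and decreasing: "\<forall>i\<in>{1..I}. \<forall>j\<in>{1..I}. i < j \<longrightarrow> \<theta> i > \<theta> j"
    and "i \<in> {1..Ksp I N \<theta> S}"
  shows "pk N \<theta> S (Ksp I N \<theta> S) < \<theta> i"
proof -
  have K: "Ksp I N \<theta> S \<in> {1..I}" "pk N \<theta> S (Ksp I N \<theta> S) < \<theta> (Ksp I N \<theta> S)"
    using Ksp_mem[OF assms(1,2)] by auto
  have "\<theta> (Ksp I N \<theta> S) \<le> \<theta> i"
    using decreasing K(1) assms(4) by (cases "i = Ksp I N \<theta> S") (auto intro: less_imp_le)
  with K(2) show ?thesis by simp
qed

lemma pk_Ksp_ge:
  assumes "0 < S"
    and decreasing: "\<forall>i\<in>{1..I}. \<forall>j\<in>{1..I}. i < j \<longrightarrow> \<theta> i > \<theta> j"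
    and "i \<in> {Ksp I N \<theta> S + 1..I}"
  shows "\<theta> i \<le> pk N \<theta> S (Ksp I N \<theta> S)"
proof -
  define K where "K = Ksp I N \<theta> S"
  have i: "Suc K \<le> i" "i \<le> I" using assms(3) unfolding K_def by auto
  then have "Suc K \<in> {1..I}" by simp
  then have "\<theta> (Suc K) \<le> pk N \<theta> S (Suc K)"
    using le_Ksp[of "Suc K" I N \<theta> S] unfolding K_def by force
  then have "\<theta> (Suc K) \<le> pk N \<theta> S K"
    using le_pk_Suc_iff[OF assms(1)] by blast
  moreover have "\<theta> i \<le> \<theta> (Suc K)"
    using decreasing i by (cases "i = Suc K") (auto intro: less_imp_le)
  ultimately show ?thesis unfolding K_def by simp
qed

theorem theorem2:
  fixes I :: nat and N :: "nat \<Rightarrow> nat" and \<theta> :: "nat \<Rightarrow> real" and S :: real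
  assumes "S > 0" and "I \<ge> 1"
    and "\<forall>i\<in>{1..I}. N i \<ge> 1"
    and "\<forall>i\<in>{1..I}. \<forall>j\<in>{1..I}. i < j \<longrightarrow> \<theta> i > \<theta> j"
    and "\<forall>i\<in>{1..I}. \<theta> i > 0"
  shows "1 \<in> {k \<in> {1..I}. \<theta> k > pk N \<theta> S k}
    \<and> feasible I N \<theta> S (pk N \<theta> S (Ksp I N \<theta> S)) N
    \<and> (\<forall>p n. feasible I N \<theta> S p n \<longrightarrow>
          revenue I \<theta> p n \<le> revenue I \<theta> (pk N \<theta> S (Ksp I N \<theta> S)) N)
    \<and> (\<forall>i\<in>{1..Ksp I N \<theta> S}. demand (\<theta> i) (pk N \<theta> S (Ksp I N \<theta> S))
          = \<theta> i / pk N \<theta> S (Ksp I N \<theta> S) - 1)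
    \<and> (\<forall>i\<in>{Ksp I N \<theta> S + 1..I}. demand (\<theta> i) (pk N \<theta> S (Ksp I N \<theta> S)) = 0)"
proof -
  define K where "K = Ksp I N \<theta> S"
  define p where "p = pk N \<theta> S K"
  have first: "pk N \<theta> S 1 < \<theta> 1"
    using pk_one_less assms(1,2,5) by simp
  have K: "1 \<le> K" "K \<le> I"
    using Ksp_mem[OF assms(2) first] unfolding K_def by auto
  have p_pos: "0 < p"
    unfolding p_def using K assms(1,3,5) by (intro pk_pos) auto
  have above: "\<forall>i\<in>{1..K}. p < \<theta> i"
    using pk_Ksp_less[OF assms(2) first assms(4)] unfolding p_def K_def by blast
  have below: "\<forall>i\<in>{K+1..I}. \<theta> i \<le> p"
    using pk_Ksp_ge[OF assms(1,4)] unfolding p_def K_def by blast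
  have saturated: "used I \<theta> p N = S"
    using used_at_pk[OF K(2)] p_pos above below unfolding p_def by blast
  have "feasible I N \<theta> S p N"
    unfolding feasible_def using p_pos saturated by simp
  then show ?thesis
    using first assms(2) revenue_le_saturated[OF _ p_pos saturated]
      demand_of_less[OF p_pos] demand_of_ge[OF p_pos] above below
    unfolding p_def K_def by auto
qed

end
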